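(* Let $\widetilde\omega:=\exp\bigl(2\int_0^1\ln K(x)\,dx\bigr)$. Then for every integer $n\ge1$ and every $x>0$, $$K(nx)=n^{\frac12nx(nx-1)+\frac1{12}}\;\widetilde\omega^{-\frac12(n^2-1)}\prod_{j=0}^{n-1}K\Bigl(x+\frac jn\Bigr)^n .$$
   Context: $K$ is the Kinkelin function: for $x>0$, $\ln K(x)=\int_0^x\ln\Gamma(t)\,dt+\frac{x(x-1)}{2}-\frac x2\ln 2\pi$; it satisfies $K(1)=1$, $K(x+1)=x^xK(x)$, and $\ln K$ extends continuously to $x=0$ with $K(0)=1$. *)

theory Defs
  imports "HOL-Analysis.Analysis"
begin

text \<open>The integrand is absolutely integrable on [0,x] (log singularity at 0),
  so the Henstock-Kurzweil integral over {0..x} is the (improper) integral.\<close>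
definition lnKinkelin :: "real \<Rightarrow> real" where
  "lnKinkelin x = integral {0..x} (\<lambda>t. ln (Gamma t)) + x * (x - 1) / 2 - x / 2 * ln (2 * pi)"

definition Kinkelin :: "real \<Rightarrow> real" where
  "Kinkelin x = exp (lnKinkelin x)"

definition omega_tilde :: real where
  "omega_tilde = exp (2 * integral {0..1} lnKinkelin)"

end

theory Submission
  imports Defs "HOL-Real_Asymp.Real_Asymp"
begin

text \<open>Write \<open>\<Delta>\<^sub>n(x) = ln K(nx) - n \<Sum>\<^sub>j ln K(x + j/n) - nx(nx - 1)/2 \<cdot> ln n\<close>.
  Since \<open>(ln K)' = ln \<Gamma> + x - 1/2 - ln(2\<pi>)/2\<close>, Gauss' multiplication formula for \<open>\<Gamma>\<close>,
  known a priori only up to a constant (it is obtained from Euler's limit formula),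
  shows that \<open>\<Delta>\<^sub>n\<close> is affine. Likewise \<open>ln K(y + 1) - ln K(y) - y ln y\<close> is a constant \<open>d\<close>,
  and shifting \<open>x\<close> by \<open>1/n\<close> ties the slope of \<open>\<Delta>\<^sub>n\<close> to \<open>d\<close>. For \<open>n = 2\<close> the Gauss
  constant is known (\<open>\<Gamma>(1/2) = \<surd>\<pi>\<close>), so the slope vanishes and hence \<open>d = 0\<close>; then all
  slopes vanish. The constant value of \<open>\<Delta>\<^sub>n\<close> is computed by integrating over \<open>[0, 1/n]\<close>,
  where the sums over \<open>j\<close> telescope to \<open>\<integral>\<^sub>0\<^sup>1 ln K\<close>.\<close>

lemma pochhammer_mult:
  fixes x :: "'a :: field_char_0"
  assumes "n \<ge> 1"
  shows "pochhammer (of_nat n * x) (n * m) =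
           of_nat n ^ (n * m) * (\<Prod>j<n. pochhammer (x + of_nat j / of_nat n) m)"
proof (induction m)
  case 0
  then show ?case by simp
next
  case (Suc m)
  have "pochhammer (of_nat n * x) (n * Suc m) = pochhammer (of_nat n * x) (n * m + n)"
    by (simp add: add.commute)
  also have "\<dots> = pochhammer (of_nat n * x) (n * m) * pochhammer (of_nat n * x + of_nat (n * m)) n"
    by (rule pochhammer_product')
  also have "pochhammer (of_nat n * x + of_nat (n * m)) n =
               (\<Prod>j<n. of_nat n * (x + of_nat j / of_nat n + of_nat m))"
    unfolding pochhammer_prod atLeast0LessThan
    using assms by (intro prod.cong) (auto simp: field_simps)
  also have "\<dots> = of_nat n ^ n * (\<Prod>j<n. x + of_nat j / of_nat n + of_nat m)"
    by (simp add: prod.distrib)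
  also note Suc
  also have "of_nat n ^ (n * m) * (\<Prod>j<n. pochhammer (x + of_nat j / of_nat n) m)
               * (of_nat n ^ n * (\<Prod>j<n. x + of_nat j / of_nat n + of_nat m))
             = of_nat n ^ (n * Suc m) * ((\<Prod>j<n. pochhammer (x + of_nat j / of_nat n) m)
               * (\<Prod>j<n. x + of_nat j / of_nat n + of_nat m))"
    by (simp add: power_add algebra_simps)
  also have "(\<Prod>j<n. pochhammer (x + of_nat j / of_nat n) m) * (\<Prod>j<n. x + of_nat j / of_nat n + of_nat m)
             = (\<Prod>j<n. pochhammer (x + of_nat j / of_nat n) (Suc m))"
    by (simp add: pochhammer_Suc prod.distrib)
  finally show ?case .
qed

lemma Gamma_series_mult_ratio:
  fixes x :: real
  assumes n: "n \<ge> 1" and x: "x > 0" and m: "m \<ge> 1"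
  shows "(\<Prod>j<n. Gamma_series (x + real j / real n) m) / Gamma_series (real n * x) (n * (m + 1) - 1)
           * exp (real n * x * (ln (real (n * (m + 1) - 1)) - ln (real m)))
         = fact m ^ n * exp ((\<Sum>j<n. real j / real n) * ln (real m)) * real n ^ (n * (m + 1))
           / fact (n * (m + 1) - 1)"
proof -
  define N where "N = n * (m + 1) - 1"
  have N1: "N + 1 = n * (m + 1)" using n by (simp add: N_def)
  define P where "P = (\<Prod>j<n. pochhammer (x + real j / real n) (m + 1))"
  have P_pos: "P > 0"
    unfolding P_def using x by (intro prod_pos pochhammer_pos) (auto intro!: add_pos_nonneg)
  have "pochhammer (real n * x) (N + 1) = real n ^ (n * (m + 1)) * P"
    unfolding N1 P_def by (rule pochhammer_mult[OF n])
  then have GS: "Gamma_series (real n * x) N =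
                   fact N * exp (real n * x * ln (real N)) / (real n ^ (n * (m + 1)) * P)"
    unfolding Gamma_series_def by simp
  have "(\<Prod>j<n. Gamma_series (x + real j / real n) m) =
          (\<Prod>j<n. fact m * exp ((x + real j / real n) * ln (real m))) / P"
    unfolding Gamma_series_def P_def by (simp add: prod_dividef)
  also have "\<dots> = fact m ^ n * exp (\<Sum>j<n. (x + real j / real n) * ln (real m)) / P"
    by (simp add: prod.distrib exp_sum)
  also have "(\<Sum>j<n. (x + real j / real n) * ln (real m)) =
               real n * x * ln (real m) + (\<Sum>j<n. real j / real n) * ln (real m)"
    by (simp add: sum.distrib sum_distrib_right sum_distrib_left algebra_simps)
  finally have prod_GS: "(\<Prod>j<n. Gamma_series (x + real j / real n) m) =
      fact m ^ n * (exp (real n * x * ln (real m)) * exp ((\<Sum>j<n. real j / real n) * ln (real m))) / P"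
    by (simp add: exp_add)
  have "exp (real n * x * (ln (real N) - ln (real m))) =
          exp (real n * x * ln (real N)) / exp (real n * x * ln (real m))"
    by (simp add: right_diff_distrib exp_diff)
  then show ?thesis
    unfolding N_def[symmetric] prod_GS GS using P_pos n by (simp add: field_simps)
qed

lemma ln_mult_sub_ln_LIMSEQ:
  assumes "n \<ge> 1"
  shows "(\<lambda>m. ln (real (n * (m + 1) - 1)) - ln (real m)) \<longlonglongrightarrow> ln (real n)"
proof (rule Lim_transform_eventually)
  have "(\<lambda>m. ln (real n + (real n - 1) / real m)) \<longlonglongrightarrow> ln (real n + 0)"
    using assms by (intro tendsto_intros) auto
  then show "(\<lambda>m. ln (real n + (real n - 1) / real m)) \<longlonglongrightarrow> ln (real n)"
    by simp
  show "\<forall>\<^sub>F m in sequentially. ln (real n + (real n - 1) / real m) = ln (real (n * (m + 1) - 1)) - ln (real m)"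
    using eventually_ge_at_top[of "1::nat"]
  proof eventually_elim
    case (elim m)
    have R: "real (n * (m + 1) - 1) = real n * real m + real n - 1"
      using assms by (simp add: of_nat_diff algebra_simps)
    have "real n * real m \<ge> 1"
      using assms elim by (metis mult_le_mono of_nat_1 of_nat_le_iff of_nat_mult mult_1)
    then have "ln (real (n * (m + 1) - 1)) - ln (real m) = ln (real (n * (m + 1) - 1) / real m)"
      using elim R assms by (subst ln_divide_pos) auto
    also have "real (n * (m + 1) - 1) / real m = real n + (real n - 1) / real m"
      using elim R by (simp add: field_simps)
    finally show ?case by simp
  qed
qed

lemma Gamma_series_mult_LIMSEQ:
  fixes x :: real
  assumes n: "n \<ge> 1" and x: "x > 0"
  shows "(\<lambda>m. (\<Prod>j<n. Gamma_series (x + real j / real n) m) / Gamma_series (real n * x) (n * (m + 1) - 1)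
           * exp (real n * x * (ln (real (n * (m + 1) - 1)) - ln (real m))))
         \<longlonglongrightarrow> (\<Prod>j<n. Gamma (x + real j / real n)) / Gamma (real n * x) * exp (real n * x * ln (real n))"
proof -
  have "strict_mono (\<lambda>m. n * (m + 1) - 1)"
    using n by (intro strict_monoI) (simp add: diff_less_mono)
  from LIMSEQ_subseq_LIMSEQ[OF Gamma_series_LIMSEQ this]
  have "(\<lambda>m. Gamma_series (real n * x) (n * (m + 1) - 1)) \<longlonglongrightarrow> Gamma (real n * x)"
    by (simp add: o_def)
  moreover have "Gamma (real n * x) \<noteq> 0"
    using n x by (intro Gamma_real_pos[THEN less_imp_neq, symmetric]) simp
  ultimately show ?thesis
    by (intro tendsto_intros Gamma_series_LIMSEQ ln_mult_sub_ln_LIMSEQ n)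
qed

lemma Gamma_mult_invariant:
  fixes x y :: real
  assumes n: "n \<ge> 1" and "x > 0" "y > 0"
  shows "(\<Prod>j<n. Gamma (x + real j / real n)) / Gamma (real n * x) * exp (real n * x * ln (real n))
       = (\<Prod>j<n. Gamma (y + real j / real n)) / Gamma (real n * y) * exp (real n * y * ln (real n))"
proof (rule LIMSEQ_unique[OF Gamma_series_mult_LIMSEQ[OF n \<open>x > 0\<close>]])
  show "(\<lambda>m. (\<Prod>j<n. Gamma_series (x + real j / real n) m) / Gamma_series (real n * x) (n * (m + 1) - 1)
           * exp (real n * x * (ln (real (n * (m + 1) - 1)) - ln (real m))))
         \<longlonglongrightarrow> (\<Prod>j<n. Gamma (y + real j / real n)) / Gamma (real n * y) * exp (real n * y * ln (real n))"
    using Gamma_series_mult_LIMSEQ[OF n \<open>y > 0\<close>]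
  proof (rule Lim_transform_eventually)
    show "\<forall>\<^sub>F m in sequentially.
            (\<Prod>j<n. Gamma_series (y + real j / real n) m) / Gamma_series (real n * y) (n * (m + 1) - 1)
              * exp (real n * y * (ln (real (n * (m + 1) - 1)) - ln (real m)))
          = (\<Prod>j<n. Gamma_series (x + real j / real n) m) / Gamma_series (real n * x) (n * (m + 1) - 1)
              * exp (real n * x * (ln (real (n * (m + 1) - 1)) - ln (real m)))"
      using eventually_ge_at_top[of "1::nat"]
      by eventually_elim (simp only: Gamma_series_mult_ratio[OF n \<open>x > 0\<close>] Gamma_series_mult_ratio[OF n \<open>y > 0\<close>])
  qed
qed

definition ln_Gauss_const :: "nat \<Rightarrow> real" where
  "ln_Gauss_const n = (\<Sum>j<n. ln (Gamma (1 + real j / real n))) + real n * ln (real n) - ln (Gamma (real n))"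

lemma sum_ln_Gamma_mult:
  assumes n: "n \<ge> 1" and x: "x > 0"
  shows "(\<Sum>j<n. ln (Gamma (x + real j / real n))) =
           ln_Gauss_const n - real n * x * ln (real n) + ln (Gamma (real n * x))"
proof -
  have ln_ratio: "ln ((\<Prod>j<n. Gamma (z + real j / real n)) / Gamma (real n * z) * exp (real n * z * ln (real n)))
      = (\<Sum>j<n. ln (Gamma (z + real j / real n))) - ln (Gamma (real n * z)) + real n * z * ln (real n)"
    if z: "z > 0" for z :: real
  proof -
    have "(\<Prod>j<n. Gamma (z + real j / real n)) > 0"
      using z by (auto intro!: prod_pos Gamma_real_pos add_pos_nonneg)
    moreover have "Gamma (real n * z) > 0"
      using z n by (auto intro!: Gamma_real_pos)
    moreover have "ln (\<Prod>j<n. Gamma (z + real j / real n)) = (\<Sum>j<n. ln (Gamma (z + real j / real n)))"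
      using z by (intro ln_prod) (auto intro!: Gamma_real_pos[THEN less_imp_neq, symmetric] add_pos_nonneg)
    ultimately show ?thesis
      by (simp add: ln_mult_pos ln_divide_pos)
  qed
  show ?thesis
    using Gamma_mult_invariant[OF n x, of 1] ln_ratio[OF x] ln_ratio[of 1]
    unfolding ln_Gauss_const_def by simp
qed

lemma continuous_on_x_ln_x: "b \<ge> 0 \<Longrightarrow> continuous_on {0..b} (\<lambda>t::real. t * ln t)"
proof (cases "b = 0")
  case False
  assume "b \<ge> 0"
  with False have b: "b > 0" by simp
  show ?thesis
  proof (rule continuous_on_IccI)
    show "((\<lambda>t::real. t * ln t) \<longlongrightarrow> 0 * ln 0) (at_right 0)"
      by simp real_asymp
    show "((\<lambda>t::real. t * ln t) \<longlongrightarrow> b * ln b) (at_left b)"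
      using b by (intro tendsto_intros filterlim_at_left_to_right[THEN iffD2] tendsto_at_left_sequentially)
        (auto intro!: tendsto_eq_intros)
  qed (use b in \<open>auto intro!: continuous_intros tendsto_eq_intros\<close>)
qed simp

lemma has_integral_ln:
  fixes y :: real
  assumes "y \<ge> 0"
  shows "(ln has_integral (y * ln y - y)) {0..y}"
proof -
  have "(ln has_integral ((y * ln y - y) - (0 * ln 0 - 0))) {0..y}"
  proof (rule fundamental_theorem_of_calculus_interior)
    show "continuous_on {0..y} (\<lambda>t. t * ln t - t)"
      using assms by (intro continuous_on_add continuous_on_diff continuous_on_x_ln_x)
                   (auto intro!: continuous_intros)
    show "((\<lambda>t. t * ln t - t) has_vector_derivative ln x) (at x)" if "x \<in> {0<..<y}" for x
      using that unfolding has_real_derivative_iff_has_vector_derivative[symmetric]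
      by (auto intro!: derivative_eq_intros)
  qed (use assms in auto)
  then show ?thesis by simp
qed

lemma isCont_ln_Gamma_real:
  fixes t :: real
  assumes "t > 0"
  shows "isCont (\<lambda>t. ln (Gamma t)) t"
proof -
  have "eventually (\<lambda>s. s \<in> {0<..}) (nhds t)"
    using assms by (intro eventually_nhds_in_open) auto
  then have ev: "eventually (\<lambda>s. ln_Gamma s = ln (Gamma s)) (nhds t)"
    by (rule eventually_mono) (auto intro!: ln_Gamma_real_pos)
  moreover have "isCont ln_Gamma t"
    using assms by (intro DERIV_isCont derivative_eq_intros) auto
  ultimately show ?thesis
    using isCont_cong[OF ev] by simp
qed

lemma continuous_on_ln_Gamma_plus1: "continuous_on {0..b} (\<lambda>t::real. ln (Gamma (t + 1)))"
  by (intro continuous_at_imp_continuous_on ballI continuous_intros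
        isCont_o2[OF _ isCont_ln_Gamma_real]) auto

lemma ln_Gamma_plus1_real:
  fixes t :: real
  assumes "t > 0"
  shows "ln (Gamma (t + 1)) = ln t + ln (Gamma t)"
proof -
  have "t \<notin> \<int>\<^sub>\<le>\<^sub>0"
    using assms by (auto elim!: nonpos_Ints_cases)
  then have "Gamma (t + 1) = t * Gamma t"
    by (rule Gamma_plus1)
  then show ?thesis
    using assms by (simp add: ln_mult_pos)
qed

text \<open>Integrating \<open>ln \<Gamma>(t + 1)\<close> instead of \<open>ln \<Gamma>(t)\<close> moves the logarithmic singularity at
  \<open>0\<close> into the explicit term \<open>y ln y\<close>.\<close>

lemma lnKinkelin_eq_integral_ln_Gamma_plus1:
  fixes y :: real
  assumes "y \<ge> 0"
  shows "lnKinkelin y = integral {0..y} (\<lambda>t. ln (Gamma (t + 1))) - y * ln y + y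
                        + y * (y - 1) / 2 - y / 2 * ln (2 * pi)"
proof -
  let ?I = "integral {0..y} (\<lambda>t. ln (Gamma (t + 1)))"
  have "((\<lambda>t. ln (Gamma (t + 1)) - ln t) has_integral (?I - (y * ln y - y))) {0..y}"
    using assms by (intro has_integral_diff has_integral_ln integrable_integral
                      integrable_continuous_real continuous_on_ln_Gamma_plus1)
  then have "((\<lambda>t. ln (Gamma t)) has_integral (?I - (y * ln y - y))) {0..y}"
    by (rule has_integral_spike_finite[where S = "{0}", rotated 2]) (auto simp: ln_Gamma_plus1_real)
  then show ?thesis
    unfolding lnKinkelin_def by (simp add: integral_unique)
qed

lemma lnKinkelin_has_real_derivative:
  fixes y :: real
  assumes "y > 0"
  shows "(lnKinkelin has_real_derivative (ln (Gamma y) + y - 1 / 2 - ln (2 * pi) / 2)) (at y)"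
proof -
  have "((\<lambda>x. integral {0..x} (\<lambda>t. ln (Gamma (t + 1)))) has_real_derivative ln (Gamma (y + 1)))
          (at y within {0..y + 1})"
    using assms by (intro integral_has_real_derivative continuous_on_ln_Gamma_plus1) auto
  moreover have "at y within {0..y + 1} = at y"
    using assms by (intro at_within_interior) (simp add: interior_atLeastAtMost_real)
  ultimately have "((\<lambda>y. integral {0..y} (\<lambda>t. ln (Gamma (t + 1))) - y * ln y + y
                        + y * (y - 1) / 2 - y / 2 * ln (2 * pi))
      has_real_derivative (ln (Gamma (y + 1)) - (ln y + 1) + 1 + (y - 1 / 2) - ln (2 * pi) / 2)) (at y)"
    using assms by (auto intro!: derivative_eq_intros simp: field_simps)
  then have "(lnKinkelin has_real_derivative (ln (Gamma (y + 1)) - (ln y + 1) + 1 + (y - 1 / 2) - ln (2 * pi) / 2)) (at y)"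
    by (rule has_field_derivative_transform_within_open[of _ _ _ "{0<..}"])
       (use assms lnKinkelin_eq_integral_ln_Gamma_plus1 in auto)
  then show ?thesis
    using ln_Gamma_plus1_real[OF assms] by (simp add: algebra_simps)
qed

lemma continuous_on_lnKinkelin:
  assumes "b \<ge> 0"
  shows "continuous_on {0..b} lnKinkelin"
proof -
  have "continuous_on {0..b} (\<lambda>y. integral {0..y} (\<lambda>t. ln (Gamma (t + 1))))"
    by (intro indefinite_integral_continuous_1 integrable_continuous_real continuous_on_ln_Gamma_plus1)
  then have "continuous_on {0..b} (\<lambda>y. integral {0..y} (\<lambda>t. ln (Gamma (t + 1))) - y * ln y + y
                                  + y * (y - 1) / 2 - y / 2 * ln (2 * pi))"
    using assms by (intro continuous_on_add continuous_on_diff continuous_on_x_ln_x)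
                   (auto intro!: continuous_intros)
  then show ?thesis
    by (rule continuous_on_cong[THEN iffD1, rotated 2])
       (auto simp: lnKinkelin_eq_integral_ln_Gamma_plus1)
qed

definition Kinkelin_mult_defect :: "nat \<Rightarrow> real \<Rightarrow> real" where
  "Kinkelin_mult_defect n x = lnKinkelin (real n * x) - real n * (\<Sum>j<n. lnKinkelin (x + real j / real n))
                              - ln (real n) * (real n * x * (real n * x - 1) / 2)"

definition Kinkelin_mult_slope :: "nat \<Rightarrow> real" where
  "Kinkelin_mult_slope n =
     real n * (real n - 1) / 2 * ln (2 * pi) + real n / 2 * ln (real n) - real n * ln_Gauss_const n"

lemma sum_of_nat_lessThan: "(\<Sum>j<n. real j) = real n * (real n - 1) / 2"
  by (induction n) (auto simp: field_simps)

lemma Kinkelin_mult_defect_deriv: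
  assumes n: "n \<ge> 1" and x: "x > 0"
  shows "(Kinkelin_mult_defect n has_real_derivative Kinkelin_mult_slope n) (at x)"
proof -
  define c where "c = ln (2 * pi)"
  define l where "l = ln (real n)"
  have pos: "x + real j / real n > 0" for j
    using x by (auto intro!: add_pos_nonneg)
  have "(Kinkelin_mult_defect n has_real_derivative
          (ln (Gamma (real n * x)) + real n * x - 1 / 2 - c / 2) * real n
          - real n * (\<Sum>j<n. ln (Gamma (x + real j / real n)) + (x + real j / real n) - 1 / 2 - c / 2)
          - l * (real n * real n * x - real n / 2)) (at x)"
    unfolding Kinkelin_mult_defect_def[abs_def] l_def c_def
    using n x pos
    by (auto intro!: derivative_eq_intros DERIV_chain2[OF lnKinkelin_has_real_derivative]
             simp: field_simps)
  also have "(\<Sum>j<n. ln (Gamma (x + real j / real n)) + (x + real j / real n) - 1 / 2 - c / 2) =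
               (\<Sum>j<n. ln (Gamma (x + real j / real n))) + real n * (x - 1 / 2 - c / 2) + (\<Sum>j<n. real j) / real n"
    by (simp add: sum.distrib sum_subtractf sum_divide_distrib algebra_simps)
  also have "(ln (Gamma (real n * x)) + real n * x - 1 / 2 - c / 2) * real n
          - real n * ((\<Sum>j<n. ln (Gamma (x + real j / real n)))
                      + real n * (x - 1 / 2 - c / 2) + (\<Sum>j<n. real j) / real n)
          - l * (real n * real n * x - real n / 2) = Kinkelin_mult_slope n"
    unfolding Kinkelin_mult_slope_def sum_ln_Gamma_mult[OF n x] sum_of_nat_lessThan c_def l_def
    using n by (simp add: field_simps)
  finally show ?thesis .
qed

lemma Kinkelin_mult_defect_affine:
  assumes "n \<ge> 1"
  shows "\<exists>a. \<forall>x>0. Kinkelin_mult_defect n x = a + Kinkelin_mult_slope n * x"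
proof -
  have "\<exists>a. \<forall>x\<in>{0<..}. Kinkelin_mult_defect n x - Kinkelin_mult_slope n * x = a"
  proof (rule has_field_derivative_zero_constant)
    fix x :: real
    assume "x \<in> {0<..}"
    then have "((\<lambda>x. Kinkelin_mult_defect n x - Kinkelin_mult_slope n * x) has_real_derivative
                 Kinkelin_mult_slope n - Kinkelin_mult_slope n * 1) (at x)"
      using assms by (intro DERIV_diff Kinkelin_mult_defect_deriv DERIV_cmult DERIV_ident) auto
    then show "((\<lambda>x. Kinkelin_mult_defect n x - Kinkelin_mult_slope n * x) has_real_derivative 0)
                 (at x within {0<..})"
      by (simp add: has_field_derivative_at_within)
  qed simp
  then show ?thesis
    by (metis diff_add_cancel greaterThan_iff add.commute)
qed

lemma lnKinkelin_plus1_diff_const: "\<exists>d. \<forall>y>0. lnKinkelin (y + 1) - lnKinkelin y - y * ln y = d"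
proof -
  have "\<exists>d. \<forall>y\<in>{0<..}. lnKinkelin (y + 1) - lnKinkelin y - y * ln y = d"
  proof (rule has_field_derivative_zero_constant)
    fix y :: real
    assume "y \<in> {0<..}"
    then have y: "y > 0" by simp
    then have "((\<lambda>y. lnKinkelin (y + 1) - lnKinkelin y - y * ln y) has_real_derivative
        (ln (Gamma (y + 1)) + (y + 1) - 1 / 2 - ln (2 * pi) / 2)
        - (ln (Gamma y) + y - 1 / 2 - ln (2 * pi) / 2) - (ln y + 1)) (at y)"
      by (auto intro!: derivative_eq_intros lnKinkelin_has_real_derivative
                       DERIV_chain2[OF lnKinkelin_has_real_derivative])
    then show "((\<lambda>y. lnKinkelin (y + 1) - lnKinkelin y - y * ln y) has_real_derivative 0) (at y within {0<..})"
      using ln_Gamma_plus1_real[OF y] by (simp add: has_field_derivative_at_within)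
  qed simp
  then show ?thesis by auto
qed

lemma sum_shift_by_inverse:
  fixes f :: "real \<Rightarrow> 'a :: ab_group_add"
  assumes "n \<ge> 1"
  shows "(\<Sum>j<n. f (x + 1 / real n + real j / real n)) = (\<Sum>j<n. f (x + real j / real n)) + (f (x + 1) - f x)"
proof -
  define g where "g j = f (x + real j / real n)" for j
  have "(\<Sum>j<n. f (x + 1 / real n + real j / real n)) = (\<Sum>j<n. g (Suc j))"
    unfolding g_def by (intro sum.cong) (auto simp: add_divide_distrib algebra_simps)
  also have "\<dots> = (\<Sum>j<n. g j) + (g n - g 0)"
    using sum_lessThan_telescope[of g n] by (simp add: sum_subtractf) (metis add.commute diff_add_cancel)
  finally show ?thesis
    unfolding g_def using assms by simp
qed

lemma Kinkelin_mult_defect_shift: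
  assumes n: "n \<ge> 1" and x: "x > 0"
    and d: "\<forall>y>0. lnKinkelin (y + 1) - lnKinkelin y - y * ln y = d"
  shows "Kinkelin_mult_defect n (x + 1 / real n) = Kinkelin_mult_defect n x + d * (1 - real n)"
proof -
  have "real n * (x + 1 / real n) = real n * x + 1"
    using n by (simp add: field_simps)
  moreover have "real n * x > 0"
    using n x by simp
  ultimately have "lnKinkelin (real n * (x + 1 / real n)) = lnKinkelin (real n * x) + real n * x * ln (real n * x) + d"
    using d by force
  moreover have "lnKinkelin (x + 1) - lnKinkelin x = x * ln x + d"
    using d x by force
  moreover have "ln (real n * x) = ln (real n) + ln x"
    using n x by (simp add: ln_mult_pos)
  ultimately show ?thesis
    unfolding Kinkelin_mult_defect_def sum_shift_by_inverse[OF n]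
    using n by (simp add: field_simps)
qed

lemma Kinkelin_mult_slope_eq:
  assumes n: "n \<ge> 1"
    and d: "\<forall>y>0. lnKinkelin (y + 1) - lnKinkelin y - y * ln y = d"
  shows "Kinkelin_mult_slope n = real n * d * (1 - real n)"
proof -
  obtain a where a: "\<forall>x>0. Kinkelin_mult_defect n x = a + Kinkelin_mult_slope n * x"
    using Kinkelin_mult_defect_affine[OF n] by blast
  have "(1::real) + 1 / real n > 0"
    by (intro add_pos_nonneg) auto
  then have "a + Kinkelin_mult_slope n * (1 + 1 / real n) = a + Kinkelin_mult_slope n * 1 + d * (1 - real n)"
    using Kinkelin_mult_defect_shift[OF n _ d, of 1] a by simp
  then show ?thesis
    using n by (simp add: field_simps)
qed

lemma ln_Gauss_const_2: "ln_Gauss_const 2 = ln (sqrt pi) + ln 2"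
proof -
  have "(1 / 2 :: real) \<notin> \<int>\<^sub>\<le>\<^sub>0"
    by (auto elim!: nonpos_Ints_cases)
  then have "Gamma (1 / 2 + 1 :: real) = 1 / 2 * Gamma (1 / 2)"
    by (rule Gamma_plus1)
  then have Gamma_3_2: "Gamma (3 / 2 :: real) = sqrt pi / 2"
    by (simp add: Gamma_one_half_real)
  have "ln (Gamma (3 / 2 :: real)) = ln (sqrt pi) - ln 2"
    unfolding Gamma_3_2 by (simp add: ln_divide_pos)
  moreover have "Gamma (2 :: real) = 1"
    using Gamma_fact[of 1, where 'a = real] by simp
  ultimately show ?thesis
    unfolding ln_Gauss_const_def by (simp add: numeral_2_eq_2)
qed

lemma Kinkelin_mult_slope_2: "Kinkelin_mult_slope 2 = 0"
  unfolding Kinkelin_mult_slope_def ln_Gauss_const_2 by (simp add: ln_mult_pos ln_sqrt)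

lemma lnKinkelin_plus1:
  assumes "y > 0"
  shows "lnKinkelin (y + 1) = lnKinkelin y + y * ln y"
proof -
  obtain d where d: "\<forall>y>0. lnKinkelin (y + 1) - lnKinkelin y - y * ln y = d"
    using lnKinkelin_plus1_diff_const by blast
  from Kinkelin_mult_slope_eq[of 2, OF _ d] have "d = 0"
    by (simp add: Kinkelin_mult_slope_2)
  with d assms show ?thesis by force
qed

text \<open>Equivalently \<open>ln_Gauss_const n = (n - 1)/2 \<cdot> ln(2\<pi>) + ln n / 2\<close>: Gauss' multiplication
  formula with its constant.\<close>

lemma Kinkelin_mult_slope_eq_0:
  assumes "n \<ge> 1"
  shows "Kinkelin_mult_slope n = 0"
  using Kinkelin_mult_slope_eq[OF assms, of 0] lnKinkelin_plus1 by simp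

lemma Kinkelin_mult_defect_const:
  assumes "n \<ge> 1"
  shows "\<exists>a. \<forall>x>0. Kinkelin_mult_defect n x = a"
  using Kinkelin_mult_defect_affine[OF assms] Kinkelin_mult_slope_eq_0[OF assms] by simp

definition lnKinkelin_integral :: "real \<Rightarrow> real" where
  "lnKinkelin_integral y = integral {0..y} lnKinkelin"

lemma lnKinkelin_integral_has_real_derivative:
  assumes "y > 0"
  shows "(lnKinkelin_integral has_real_derivative lnKinkelin y) (at y)"
proof -
  have "(lnKinkelin_integral has_real_derivative lnKinkelin y) (at y within {0..y + 1})"
    unfolding lnKinkelin_integral_def[abs_def]
    using assms by (intro integral_has_real_derivative continuous_on_lnKinkelin) auto
  moreover have "at y within {0..y + 1} = at y"
    using assms by (intro at_within_interior) (simp add: interior_atLeastAtMost_real)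
  ultimately show ?thesis by simp
qed

lemma continuous_on_lnKinkelin_integral: "b \<ge> 0 \<Longrightarrow> continuous_on {0..b} lnKinkelin_integral"
  unfolding lnKinkelin_integral_def[abs_def]
  by (intro indefinite_integral_continuous_1 integrable_continuous_real continuous_on_lnKinkelin)

definition Kinkelin_mult_defect_primitive :: "nat \<Rightarrow> real \<Rightarrow> real" where
  "Kinkelin_mult_defect_primitive n x =
     lnKinkelin_integral (real n * x) / real n - real n * (\<Sum>j<n. lnKinkelin_integral (x + real j / real n))
     - ln (real n) * (real n ^ 2 * x ^ 3 / 6 - real n * x ^ 2 / 4)"

lemma Kinkelin_mult_defect_primitive_deriv:
  assumes n: "n \<ge> 1" and x: "x > 0"
  shows "(Kinkelin_mult_defect_primitive n has_real_derivative Kinkelin_mult_defect n x) (at x)"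
proof -
  have "((\<lambda>x. lnKinkelin_integral (real n * x)) has_real_derivative lnKinkelin (real n * x) * real n) (at x)"
    by (rule DERIV_chain2[OF lnKinkelin_integral_has_real_derivative])
       (use n x in \<open>auto intro!: derivative_eq_intros\<close>)
  moreover have "((\<lambda>x. lnKinkelin_integral (x + real j / real n)) has_real_derivative
                   lnKinkelin (x + real j / real n) * 1) (at x)" for j
    using x by (intro DERIV_chain2[OF lnKinkelin_integral_has_real_derivative])
               (auto intro!: derivative_eq_intros add_pos_nonneg)
  moreover have "((\<lambda>x. real n ^ 2 * x ^ 3 / 6 - real n * x ^ 2 / 4) has_real_derivative
                   real n * x * (real n * x - 1) / 2) (at x)"
    by (auto intro!: derivative_eq_intros simp: field_simps power2_eq_square)
  ultimately have "(Kinkelin_mult_defect_primitive n has_real_derivative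
      lnKinkelin (real n * x) * real n / real n - real n * (\<Sum>j<n. lnKinkelin (x + real j / real n) * 1)
      - ln (real n) * (real n * x * (real n * x - 1) / 2)) (at x)"
    unfolding Kinkelin_mult_defect_primitive_def[abs_def]
    by (intro DERIV_diff DERIV_cmult DERIV_cdivide DERIV_sum)
  then show ?thesis
    unfolding Kinkelin_mult_defect_def using n by simp
qed

lemma continuous_on_Kinkelin_mult_defect_primitive:
  assumes "n \<ge> 1"
  shows "continuous_on {0..1 / real n} (Kinkelin_mult_defect_primitive n)"
proof -
  have "continuous_on {0..1 / real n} (\<lambda>x. lnKinkelin_integral (real n * x))"
    by (rule continuous_on_compose2[OF continuous_on_lnKinkelin_integral[of 1]])
       (use assms in \<open>auto intro!: continuous_intros simp: field_simps\<close>)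
  moreover have "continuous_on {0..1 / real n} (\<lambda>x. lnKinkelin_integral (x + real j / real n))"
    if "j < n" for j
  proof (rule continuous_on_compose2[OF continuous_on_lnKinkelin_integral[of 2]])
    have "1 / real n \<le> 1" "real j / real n \<le> 1"
      using assms that by auto
    then show "(\<lambda>x. x + real j / real n) ` {0..1 / real n} \<subseteq> {0..2}"
      by auto
  qed (auto intro!: continuous_intros)
  ultimately show ?thesis
    unfolding Kinkelin_mult_defect_primitive_def[abs_def] using assms by (intro continuous_intros) auto
qed

lemma Kinkelin_mult_defect_primitive_diff:
  assumes n: "n \<ge> 1"
  shows "Kinkelin_mult_defect_primitive n (1 / real n) - Kinkelin_mult_defect_primitive n 0 =
           (lnKinkelin_integral 1 - real n ^ 2 * lnKinkelin_integral 1 + ln (real n) / 12) / real n"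
proof -
  let ?M = lnKinkelin_integral
  have "Kinkelin_mult_defect_primitive n (1 / real n) - Kinkelin_mult_defect_primitive n 0 =
          ?M 1 / real n - real n * ((\<Sum>j<n. ?M (0 + 1 / real n + real j / real n))
                                    - (\<Sum>j<n. ?M (0 + real j / real n)))
          - ln (real n) * (real n ^ 2 * (1 / real n) ^ 3 / 6 - real n * (1 / real n) ^ 2 / 4)"
    unfolding Kinkelin_mult_defect_primitive_def using n
    by (simp add: lnKinkelin_integral_def algebra_simps)
  also have "(\<Sum>j<n. ?M (0 + 1 / real n + real j / real n)) - (\<Sum>j<n. ?M (0 + real j / real n)) = ?M 1"
    using sum_shift_by_inverse[OF n, of ?M 0] by (simp add: lnKinkelin_integral_def)
  also have "real n ^ 2 * (1 / real n) ^ 3 / 6 - real n * (1 / real n) ^ 2 / 4 = - 1 / (12 * real n)"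
    using n by (simp add: field_simps power2_eq_square power3_eq_cube)
  finally show ?thesis
    using n by (simp add: field_simps power2_eq_square)
qed

lemma Kinkelin_mult_defect_eq:
  assumes n: "n \<ge> 1" and "x > 0"
  shows "Kinkelin_mult_defect n x = (1 - real n ^ 2) * lnKinkelin_integral 1 + ln (real n) / 12"
proof -
  obtain a where a: "\<forall>x>0. Kinkelin_mult_defect n x = a"
    using Kinkelin_mult_defect_const[OF n] by blast
  have "(Kinkelin_mult_defect n has_integral
           (Kinkelin_mult_defect_primitive n (1 / real n) - Kinkelin_mult_defect_primitive n 0)) {0..1 / real n}"
  proof (rule fundamental_theorem_of_calculus_interior)
    show "continuous_on {0..1 / real n} (Kinkelin_mult_defect_primitive n)"
      by (rule continuous_on_Kinkelin_mult_defect_primitive[OF n])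
    show "(Kinkelin_mult_defect_primitive n has_vector_derivative Kinkelin_mult_defect n t) (at t)"
      if "t \<in> {0<..<1 / real n}" for t
      unfolding has_real_derivative_iff_has_vector_derivative[symmetric]
      using that by (intro Kinkelin_mult_defect_primitive_deriv[OF n]) simp
  qed simp
  moreover have "(Kinkelin_mult_defect n has_integral (a * (1 / real n))) {0..1 / real n}"
  proof (rule has_integral_spike_finite[where S = "{0}"])
    show "((\<lambda>x. a) has_integral (a * (1 / real n))) {0..1 / real n}"
      using has_integral_const_real[of a 0 "1 / real n"] by (simp add: mult.commute)
  qed (use a in auto)
  ultimately have "a * (1 / real n) =
      (lnKinkelin_integral 1 - real n ^ 2 * lnKinkelin_integral 1 + ln (real n) / 12) / real n"
    unfolding Kinkelin_mult_defect_primitive_diff[OF n] by (rule has_integral_unique[symmetric])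
  then have "a = lnKinkelin_integral 1 - real n ^ 2 * lnKinkelin_integral 1 + ln (real n) / 12"
    using n by (simp add: field_simps)
  then show ?thesis
    using a \<open>x > 0\<close> by (simp add: algebra_simps)
qed

theorem mainTheorem16:
  fixes n :: nat and x :: real
  assumes "n \<ge> 1" and "x > 0"
  shows "Kinkelin (real n * x) =
    real n powr (real n * x * (real n * x - 1) / 2 + 1 / 12)
    * omega_tilde powr (- (real n ^ 2 - 1) / 2)
    * (\<Prod>j<n. Kinkelin (x + real j / real n) ^ n)"
proof -
  let ?S = "\<Sum>j<n. lnKinkelin (x + real j / real n)"
  let ?e = "real n * x * (real n * x - 1) / 2 + 1 / 12"
  have lnK: "lnKinkelin (real n * x) =
               ?e * ln (real n) + - (real n ^ 2 - 1) / 2 * (2 * lnKinkelin_integral 1) + real n * ?S"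
    using Kinkelin_mult_defect_eq[OF assms] unfolding Kinkelin_mult_defect_def
    by (simp add: field_simps)
  have n_powr: "real n powr ?e = exp (?e * ln (real n))"
    using assms by (simp add: powr_def)
  have omega_powr: "omega_tilde powr (- (real n ^ 2 - 1) / 2) =
                      exp (- (real n ^ 2 - 1) / 2 * (2 * lnKinkelin_integral 1))"
    unfolding omega_tilde_def lnKinkelin_integral_def by (simp add: powr_def)
  have prod_powr: "(\<Prod>j<n. Kinkelin (x + real j / real n) ^ n) = exp (real n * ?S)"
    unfolding Kinkelin_def
    by (simp add: exp_of_nat_mult [symmetric] exp_sum sum_distrib_left flip: power_mult_distrib)
  have "Kinkelin (real n * x) = exp (?e * ln (real n))
          * exp (- (real n ^ 2 - 1) / 2 * (2 * lnKinkelin_integral 1)) * exp (real n * ?S)"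
    unfolding Kinkelin_def lnK by (simp add: exp_add)
  then show ?thesis
    unfolding n_powr omega_powr prod_powr .
qed

end
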